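(* Let $\ell:\mathcal{R}\to\mathbb{R}^{\mathcal{Y}}_+$ be a discrete loss and $L:\mathbb{R}^d\to\mathbb{R}^{\mathcal{Y}}_+$ a minimizable loss. Then $L$ embeds $\ell$ if and only if their Bayes risks coincide: $\underline{L}(p)=\underline{\ell}(p)$ for all $p\in\Delta_{\mathcal{Y}}$.
   Context: $\mathcal{Y}$ is a finite label set, $\Delta_{\mathcal{Y}}$ the simplex, $\mathbb{R}^{\mathcal{Y}}_+$ the nonnegative orthant. For a loss $L:\mathcal{R}\to\mathbb{R}^{\mathcal{Y}}_+$, the Bayes risk is $\underline{L}(p)=\inf_{r\in\mathcal{R}}\langle p,L(r)\rangle$. Discrete: $\mathcal{R}$ finite. Minimizable: the infimum is attained for every $p$; then $\mathrm{prop}[L](p)=\arg\min_r\langle p,L(r)\rangle$. $\mathcal{S}$ is representative for $L$ if $\mathrm{prop}[L](p)\cap\mathcal{S}\neq\emptyset$ for all $p$. $L$ embeds $\ell$ if there exist a representative set $\mathcal{S}$ for $\ell$ and an injective $\varphi:\mathcal{S}\to\mathbb{R}^d$ with (i) $L(\varphi(r))=\ell(r)$ for $r\in\mathcal{S}$ and (ii) $r\in\mathrm{prop}[\ell](p)\iff\varphi(r)\in\mathrm{prop}[L](p)$ for all $p$, $r\in\mathcal{S}$. *)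

theory Defs
  imports "HOL-Analysis.Analysis"
begin

definition prob_simplex :: "('y::finite \<Rightarrow> real) set" where
  "prob_simplex = {p. (\<forall>y. 0 \<le> p y) \<and> sum p UNIV = 1}"

definition nonneg_loss :: "('r \<Rightarrow> 'y::finite \<Rightarrow> real) \<Rightarrow> bool" where
  "nonneg_loss L \<longleftrightarrow> (\<forall>r y. 0 \<le> L r y)"

definition exp_loss :: "('y::finite \<Rightarrow> real) \<Rightarrow> ('r \<Rightarrow> 'y \<Rightarrow> real) \<Rightarrow> 'r \<Rightarrow> real" where
  "exp_loss p L r = (\<Sum>y\<in>UNIV. p y * L r y)"

definition bayes_risk :: "('r \<Rightarrow> 'y::finite \<Rightarrow> real) \<Rightarrow> ('y \<Rightarrow> real) \<Rightarrow> real" where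
  "bayes_risk L p = (INF r. exp_loss p L r)"

definition minimizable :: "('r \<Rightarrow> 'y::finite \<Rightarrow> real) \<Rightarrow> bool" where
  "minimizable L \<longleftrightarrow> (\<forall>p\<in>prob_simplex. \<exists>r. \<forall>r'. exp_loss p L r \<le> exp_loss p L r')"

definition prop_set :: "('r \<Rightarrow> 'y::finite \<Rightarrow> real) \<Rightarrow> ('y \<Rightarrow> real) \<Rightarrow> 'r set" where
  "prop_set L p = {r. \<forall>r'. exp_loss p L r \<le> exp_loss p L r'}"

definition representative :: "'r set \<Rightarrow> ('r \<Rightarrow> 'y::finite \<Rightarrow> real) \<Rightarrow> bool" where
  "representative S L \<longleftrightarrow> (\<forall>p\<in>prob_simplex. prop_set L p \<inter> S \<noteq> {})"

definition embeds :: "('u \<Rightarrow> 'y::finite \<Rightarrow> real) \<Rightarrow> ('r \<Rightarrow> 'y \<Rightarrow> real) \<Rightarrow> bool" where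
  "embeds L ell \<longleftrightarrow> (\<exists>S (\<phi>::'r \<Rightarrow> 'u). representative S ell \<and> inj_on \<phi> S \<and>
      (\<forall>r\<in>S. L (\<phi> r) = ell r) \<and>
      (\<forall>p\<in>prob_simplex. \<forall>r\<in>S. r \<in> prop_set ell p \<longleftrightarrow> \<phi> r \<in> prop_set L p))"

end

theory Submission
  imports Defs
begin

text \<open>
  If \<open>L\<close> embeds \<open>\<ell>\<close>, a report \<open>r\<close> of the representative set that is optimal at \<open>p\<close> and its
  image \<open>\<phi> r\<close> are both optimal and have the same loss vector, so the Bayes risks agree.

  Conversely, regard weights as points of \<open>\<real>\<^sup>\<Y>\<close>. The cells \<open>{x. r is \<ell>-optimal at x}\<close> are
  closed and cover the open positive orthant. If \<open>r\<close> is \<open>\<ell>\<close>-optimal on an open set \<open>V\<close> and \<open>u\<close>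
  is \<open>L\<close>-optimal at some \<open>x\<^sub>0 \<in> V\<close>, equality of the Bayes risks gives
  \<open>\<langle>x, L u - \<ell> r\<rangle> \<ge> 0\<close> on \<open>V\<close> with equality at \<open>x\<^sub>0\<close>, which forces \<open>L u = \<ell> r\<close>.
  As a finite closed cover of a nonempty open set has a member with interior points in that set,
  the union of the cells of reports whose loss vectors are attained by \<open>L\<close> is a closed set
  containing the positive orthant, hence the whole simplex. Keeping one report per attained loss
  vector gives a representative set on which \<open>L\<close> embeds \<open>\<ell>\<close>.
\<close>

lemma bayes_risk_eq_exp_loss:
  assumes "r \<in> prop_set L p"
  shows "bayes_risk L p = exp_loss p L r"
  using assms unfolding bayes_risk_def prop_set_def by (intro cInf_eq_minimum) auto

lemma bayes_risk_le_exp_loss: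
  assumes "prop_set L p \<noteq> {}"
  shows "bayes_risk L p \<le> exp_loss p L r"
proof -
  obtain r0 where "r0 \<in> prop_set L p"
    using assms by blast
  then show ?thesis
    by (simp add: bayes_risk_eq_exp_loss) (simp add: prop_set_def)
qed

lemma mem_prop_set_iff_le_bayes_risk:
  assumes "prop_set L p \<noteq> {}"
  shows "r \<in> prop_set L p \<longleftrightarrow> exp_loss p L r \<le> bayes_risk L p"
proof
  assume "exp_loss p L r \<le> bayes_risk L p"
  then show "r \<in> prop_set L p"
    using bayes_risk_le_exp_loss[OF assms] unfolding prop_set_def by (blast intro: order_trans)
qed (simp add: bayes_risk_eq_exp_loss)

lemma prop_set_nonempty_if_finite:
  fixes L :: "'r::finite \<Rightarrow> 'y::finite \<Rightarrow> real"
  shows "prop_set L p \<noteq> {}"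
proof -
  have "Min (range (exp_loss p L)) \<in> range (exp_loss p L)"
    by (intro Min_in) auto
  then obtain r where "exp_loss p L r = Min (range (exp_loss p L))"
    by (metis imageE)
  then have "r \<in> prop_set L p"
    unfolding prop_set_def by simp
  then show ?thesis
    by blast
qed

lemma minimizable_iff_prop_set_nonempty:
  "minimizable L \<longleftrightarrow> (\<forall>p\<in>prob_simplex. prop_set L p \<noteq> {})"
  unfolding minimizable_def prop_set_def by blast

lemma exp_loss_eq_if_same_loss_vector:
  assumes "L u = ell r"
  shows "exp_loss p L u = exp_loss p ell r"
  using assms by (simp add: exp_loss_def)

lemma mem_prop_set_iff_if_bayes_risk_eq:
  assumes "bayes_risk L p = bayes_risk ell p"
    and "prop_set L p \<noteq> {}" "prop_set ell p \<noteq> {}"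
    and "L u = ell r"
  shows "u \<in> prop_set L p \<longleftrightarrow> r \<in> prop_set ell p"
proof -
  have "exp_loss p L u = exp_loss p ell r"
    using assms(4) by (rule exp_loss_eq_if_same_loss_vector)
  then show ?thesis
    using assms(1-3) by (simp add: mem_prop_set_iff_le_bayes_risk)
qed

lemma bayes_risk_eq_if_embeds:
  assumes "embeds L ell" "p \<in> prob_simplex"
  shows "bayes_risk L p = bayes_risk ell p"
proof -
  obtain S \<phi> where rep: "representative S ell"
    and loss: "\<forall>r\<in>S. L (\<phi> r) = ell r"
    and opt: "\<forall>r\<in>S. r \<in> prop_set ell p \<longleftrightarrow> \<phi> r \<in> prop_set L p"
    using assms unfolding embeds_def by blast
  obtain r where r: "r \<in> S" "r \<in> prop_set ell p"
    using rep \<open>p \<in> prob_simplex\<close> unfolding representative_def by blast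
  have "bayes_risk L p = exp_loss p L (\<phi> r)"
    using r opt by (simp add: bayes_risk_eq_exp_loss)
  also have "\<dots> = exp_loss p ell r"
    using r loss by (simp add: exp_loss_def)
  also have "\<dots> = bayes_risk ell p"
    using r by (simp add: bayes_risk_eq_exp_loss)
  finally show ?thesis .
qed

lemma exp_loss_scale:
  "exp_loss (\<lambda>y. c * p y) L r = c * exp_loss p L r"
  by (simp add: exp_loss_def sum_distrib_left mult.assoc)

lemma prop_set_scale:
  assumes "c > 0"
  shows "prop_set L (\<lambda>y. c * p y) = prop_set L p"
  using assms by (simp add: prop_set_def exp_loss_scale)

lemma bayes_risk_scale:
  assumes "c > 0" "prop_set L p \<noteq> {}"
  shows "bayes_risk L (\<lambda>y. c * p y) = c * bayes_risk L p"
proof -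
  obtain r where "r \<in> prop_set L p"
    using assms(2) by blast
  then show ?thesis
    using assms(1) by (simp add: bayes_risk_eq_exp_loss prop_set_scale exp_loss_scale)
qed

lemma exp_loss_vec_nth:
  "exp_loss (vec_nth x) L r = x \<bullet> (\<chi> y. L r y)"
  by (simp add: exp_loss_def inner_vec_def)

definition positive_orthant :: "(real^'n) set" where
  "positive_orthant = {x. \<forall>i. 0 < x $ i}"

lemma open_positive_orthant: "open positive_orthant"
proof -
  have "positive_orthant = (\<Inter>i. {x::real^'n. 0 < x $ i})"
    unfolding positive_orthant_def by auto
  also have "open \<dots>"
    by (intro open_INT ballI finite open_Collect_less continuous_intros)
  finally show ?thesis .
qed

lemma positive_orthant_normalize:
  assumes "x \<in> positive_orthant"
  obtains c p where "c > 0" "p \<in> prob_simplex" "vec_nth x = (\<lambda>y. c * p y)"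
proof
  define c where "c = (\<Sum>y\<in>UNIV. x $ y)"
  show "c > 0"
    using assms unfolding c_def positive_orthant_def by (intro sum_pos) auto
  then show "(\<lambda>y. x $ y / c) \<in> prob_simplex"
    using assms by (auto simp: prob_simplex_def positive_orthant_def c_def less_imp_le
        simp flip: sum_divide_distrib)
  show "vec_nth x = (\<lambda>y. c * (x $ y / c))"
    using \<open>c > 0\<close> by auto
qed

lemma nonneg_mem_closure_positive_orthant:
  fixes x :: "real^'n"
  assumes "\<forall>i. 0 \<le> x $ i"
  shows "x \<in> closure positive_orthant"
proof -
  define xs where "xs n = x + inverse (real (Suc n)) *\<^sub>R (\<chi> i. 1)" for n
  have "xs \<longlonglongrightarrow> x + 0 *\<^sub>R (\<chi> i. 1)"
    unfolding xs_def by (intro tendsto_intros LIMSEQ_inverse_real_of_nat)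
  moreover have "xs n \<in> positive_orthant" for n
    using assms unfolding xs_def positive_orthant_def by (auto intro: add_nonneg_pos)
  ultimately show ?thesis
    unfolding closure_sequential by auto
qed

lemma bayes_risk_eq_on_positive_orthant:
  fixes ell :: "'r::finite \<Rightarrow> 'y::finite \<Rightarrow> real"
  assumes "minimizable L" "\<forall>p\<in>prob_simplex. bayes_risk L p = bayes_risk ell p"
    and "x \<in> positive_orthant"
  shows "prop_set L (vec_nth x) \<noteq> {}"
    and "bayes_risk L (vec_nth x) = bayes_risk ell (vec_nth x)"
proof -
  obtain c p where "c > 0" "p \<in> prob_simplex" and x: "vec_nth x = (\<lambda>y. c * p y)"
    using positive_orthant_normalize[OF assms(3)] .
  moreover have "prop_set L p \<noteq> {}"
    using assms(1) \<open>p \<in> prob_simplex\<close> by (simp add: minimizable_iff_prop_set_nonempty)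
  ultimately show "prop_set L (vec_nth x) \<noteq> {}"
    and "bayes_risk L (vec_nth x) = bayes_risk ell (vec_nth x)"
    using assms(2) by (simp_all add: prop_set_scale bayes_risk_scale prop_set_nonempty_if_finite)
qed

lemma eq_0_if_inner_local_min:
  fixes v :: "'a::real_inner"
  assumes "open V" "x0 \<in> V" "\<forall>x\<in>V. 0 \<le> x \<bullet> v" "x0 \<bullet> v = 0"
  shows "v = 0"
proof (rule ccontr)
  assume "v \<noteq> 0"
  obtain e where "e > 0" "ball x0 e \<subseteq> V"
    using assms(1,2) open_contains_ball by blast
  define t where "t = e / (2 * norm v)"
  have "t > 0"
    using \<open>e > 0\<close> \<open>v \<noteq> 0\<close> by (simp add: t_def)
  have "x0 - t *\<^sub>R v \<in> ball x0 e"
    using \<open>e > 0\<close> \<open>v \<noteq> 0\<close> by (simp add: t_def dist_norm)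
  then have "0 \<le> (x0 - t *\<^sub>R v) \<bullet> v"
    using assms(3) \<open>ball x0 e \<subseteq> V\<close> by blast
  also have "\<dots> = - t * (v \<bullet> v)"
    using assms(4) by (simp add: inner_diff_left)
  also have "\<dots> < 0"
    using \<open>t > 0\<close> \<open>v \<noteq> 0\<close> by simp
  finally show False
    by simp
qed

lemma finite_closed_cover_meets_interior:
  assumes "finite F" "\<And>C. C \<in> F \<Longrightarrow> closed C"
    and "open W" "W \<noteq> {}" "W \<subseteq> \<Union>F"
  shows "\<exists>C\<in>F. W \<inter> interior C \<noteq> {}"
  using assms
proof (induction F arbitrary: W rule: finite_induct)
  case (insert C F)
  show ?case
  proof (cases "W \<subseteq> C")
    case True
    then have "W \<subseteq> interior C"
      using \<open>open W\<close> by (rule interior_maximal)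
    then show ?thesis
      using \<open>W \<noteq> {}\<close> by blast
  next
    case False
    then have "\<exists>C'\<in>F. (W - C) \<inter> interior C' \<noteq> {}"
      using insert.prems by (intro insert.IH) auto
    then show ?thesis
      by blast
  qed
qed simp

definition optimal_cell :: "('r \<Rightarrow> 'y::finite \<Rightarrow> real) \<Rightarrow> 'r \<Rightarrow> (real^'y) set" where
  "optimal_cell ell r = {x. r \<in> prop_set ell (vec_nth x)}"

lemma closed_optimal_cell: "closed (optimal_cell ell r)"
proof -
  have "optimal_cell ell r = (\<Inter>r'. {x. x \<bullet> (\<chi> y. ell r y) \<le> x \<bullet> (\<chi> y. ell r' y)})"
    by (auto simp: optimal_cell_def prop_set_def exp_loss_vec_nth)
  also have "closed \<dots>"
    by (intro closed_INT ballI closed_Collect_le continuous_intros)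
  finally show ?thesis .
qed

lemma loss_vector_eq_on_open_optimal_cell:
  assumes "open V" "x0 \<in> V" "V \<subseteq> optimal_cell ell r"
    and "\<And>x. x \<in> V \<Longrightarrow> prop_set L (vec_nth x) \<noteq> {}"
    and "\<And>x. x \<in> V \<Longrightarrow> bayes_risk L (vec_nth x) = bayes_risk ell (vec_nth x)"
    and "u \<in> prop_set L (vec_nth x0)"
  shows "L u = ell r"
proof -
  define v where "v = (\<chi> y. L u y) - (\<chi> y. ell r y)"
  have risk: "bayes_risk L (vec_nth x) = x \<bullet> (\<chi> y. ell r y)" if "x \<in> V" for x
    using that assms(3,5) by (auto simp: optimal_cell_def bayes_risk_eq_exp_loss exp_loss_vec_nth)
  have "0 \<le> x \<bullet> v" if "x \<in> V" for x
    using bayes_risk_le_exp_loss[OF assms(4)[OF that], of u] risk[OF that]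
    by (simp add: v_def inner_diff_right exp_loss_vec_nth)
  moreover have "x0 \<bullet> v = 0"
    using assms(6) risk[OF assms(2)]
    by (simp add: v_def inner_diff_right exp_loss_vec_nth bayes_risk_eq_exp_loss)
  ultimately have "v = 0"
    using assms(1,2) by (blast intro: eq_0_if_inner_local_min)
  then show ?thesis
    by (simp add: v_def vec_eq_iff fun_eq_iff)
qed

lemma exists_optimal_report_attained:
  fixes ell :: "'r::finite \<Rightarrow> 'y::finite \<Rightarrow> real"
  assumes "minimizable L" "\<forall>p\<in>prob_simplex. bayes_risk L p = bayes_risk ell p"
    and "p \<in> prob_simplex"
  shows "\<exists>r\<in>prop_set ell p. ell r \<in> range L"
proof -
  define D where "D = (\<Union>r\<in>{r. ell r \<in> range L}. optimal_cell ell r)"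
  have "closed D"
    unfolding D_def by (rule closed_UN) (simp_all add: closed_optimal_cell)
  have "positive_orthant \<subseteq> D"
  proof (rule ccontr)
    assume "\<not> positive_orthant \<subseteq> D"
    define W where "W = positive_orthant - D"
    have "open W"
      unfolding W_def using open_positive_orthant \<open>closed D\<close> by (rule open_Diff)
    moreover have "W \<noteq> {}"
      unfolding W_def using \<open>\<not> positive_orthant \<subseteq> D\<close> by blast
    moreover have "W \<subseteq> \<Union>(range (optimal_cell ell))"
    proof
      fix x
      obtain r where "r \<in> prop_set ell (vec_nth x)"
        using prop_set_nonempty_if_finite by blast
      then show "x \<in> \<Union>(range (optimal_cell ell))"
        unfolding optimal_cell_def by blast
    qed
    ultimately have "\<exists>C\<in>range (optimal_cell ell). W \<inter> interior C \<noteq> {}"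
      by (intro finite_closed_cover_meets_interior) (auto simp: closed_optimal_cell)
    then obtain r where "W \<inter> interior (optimal_cell ell r) \<noteq> {}"
      by blast
    then obtain x0 where x0: "x0 \<in> W \<inter> interior (optimal_cell ell r)"
      by blast
    have "W \<subseteq> positive_orthant"
      unfolding W_def by blast
    then obtain u where u: "u \<in> prop_set L (vec_nth x0)"
      using x0 bayes_risk_eq_on_positive_orthant(1)[OF assms(1,2)] by blast
    have "L u = ell r"
    proof (rule loss_vector_eq_on_open_optimal_cell[OF _ x0 _ _ _ u])
      show "open (W \<inter> interior (optimal_cell ell r))"
        using \<open>open W\<close> by blast
      show "W \<inter> interior (optimal_cell ell r) \<subseteq> optimal_cell ell r"
        using interior_subset by blast
    qed (use \<open>W \<subseteq> positive_orthant\<close> bayes_risk_eq_on_positive_orthant[OF assms(1,2)] in blast)+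
    then have "x0 \<in> D"
      using x0 interior_subset unfolding D_def by (blast intro: sym)
    then show False
      using x0 unfolding W_def by blast
  qed
  have "vec_nth (\<chi> y. p y) = p"
    by (simp add: vec_lambda_inverse)
  then have "(\<chi> y. p y) \<in> closure positive_orthant"
    using \<open>p \<in> prob_simplex\<close> by (intro nonneg_mem_closure_positive_orthant) (simp add: prob_simplex_def)
  then have "(\<chi> y. p y) \<in> D"
    using \<open>positive_orthant \<subseteq> D\<close> \<open>closed D\<close> closure_minimal by blast
  then show ?thesis
    using \<open>vec_nth (\<chi> y. p y) = p\<close> unfolding D_def optimal_cell_def by auto
qed

lemma embeds_if_bayes_risk_eq:
  fixes ell :: "'r::finite \<Rightarrow> 'y::finite \<Rightarrow> real"
  assumes "minimizable L" "\<forall>p\<in>prob_simplex. bayes_risk L p = bayes_risk ell p"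
  shows "embeds L ell"
proof -
  \<comment> \<open>One report per loss vector attained by both losses, so that \<open>\<phi>\<close> is injective on \<open>S\<close>.\<close>
  define S where "S = inv ell ` (range ell \<inter> range L)"
  define \<phi> where "\<phi> = inv L \<circ> ell"
  have attained: "ell r \<in> range L" and inv_ell: "inv ell (ell r) = r" if "r \<in> S" for r
  proof -
    obtain v where v: "v \<in> range ell" "v \<in> range L" "r = inv ell v"
      using \<open>r \<in> S\<close> unfolding S_def by blast
    then have "ell r = v"
      by (simp add: f_inv_into_f)
    with v show "ell r \<in> range L" "inv ell (ell r) = r"
      by simp_all
  qed
  have loss: "L (\<phi> r) = ell r" if "r \<in> S" for r
    using attained[OF that] by (simp add: \<phi>_def f_inv_into_f)
  have "inj_on ell S"
    by (rule inj_on_inverseI[where g = "inv ell"]) (rule inv_ell)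
  then have "inj_on (L \<circ> \<phi>) S"
    using loss by (simp add: inj_on_def)
  then have "inj_on \<phi> S"
    by (rule inj_on_imageI2)
  moreover have "representative S ell"
    unfolding representative_def
  proof
    fix p :: "'y \<Rightarrow> real"
    assume "p \<in> prob_simplex"
    then obtain r where r: "r \<in> prop_set ell p" "ell r \<in> range L"
      using exists_optimal_report_attained[OF assms] by blast
    define r' where "r' = inv ell (ell r)"
    have "r' \<in> S"
      unfolding r'_def S_def using r(2) by blast
    moreover have "ell r' = ell r"
      unfolding r'_def by (rule f_inv_into_f[OF rangeI])
    then have "r' \<in> prop_set ell p"
      using r(1) by (simp add: prop_set_def exp_loss_def)
    ultimately show "prop_set ell p \<inter> S \<noteq> {}"
      by blast
  qed
  moreover have "r \<in> prop_set ell p \<longleftrightarrow> \<phi> r \<in> prop_set L p"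
    if "p \<in> prob_simplex" "r \<in> S" for p r
  proof -
    have "prop_set L p \<noteq> {}"
      using assms(1) \<open>p \<in> prob_simplex\<close> by (simp add: minimizable_iff_prop_set_nonempty)
    moreover have "bayes_risk L p = bayes_risk ell p"
      using assms(2) \<open>p \<in> prob_simplex\<close> by blast
    ultimately show ?thesis
      using mem_prop_set_iff_if_bayes_risk_eq prop_set_nonempty_if_finite loss[OF \<open>r \<in> S\<close>]
      by metis
  qed
  ultimately show ?thesis
    unfolding embeds_def using loss by blast
qed

theorem proposition2:
  fixes ell :: "'r::finite \<Rightarrow> 'y::finite \<Rightarrow> real"
    and L :: "real^'d \<Rightarrow> 'y \<Rightarrow> real"
  assumes "nonneg_loss ell"
    and "nonneg_loss L"
    and "minimizable L"
  shows "embeds L ell \<longleftrightarrow> (\<forall>p\<in>prob_simplex. bayes_risk L p = bayes_risk ell p)"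
  using bayes_risk_eq_if_embeds embeds_if_bayes_risk_eq[OF assms(3)] by blast

end
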